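(* Let $S$ be a semigroup, let $a\in S$, and define $P=\{x\in Sa : x\,\mathscr L\, ax\}$. If $aSa\subseteq\operatorname{Reg}(S)$, then $P\subseteq\operatorname{Reg}(S)$; consequently, in this case $\operatorname{Reg}(Sa)=P$, and this set is a right ideal of the semigroup $Sa$ (i.e. $xy\in P$ for all $x\in P$, $y\in Sa$).
   Context: $Sa=\{xa:x\in S\}$, $aSa=\{axa:x\in S\}$. For a semigroup $T$, $\operatorname{Reg}(T)=\{x\in T: x=xyx \text{ for some } y\in T\}$. $\mathscr L$ is Green's $\mathscr L$-relation on $S$: $x\,\mathscr L\,y$ iff $S^1x=S^1y$, $S^1$ being $S$ with an identity adjoined if necessary. *)

theory Defs
  imports Main
begin

text \<open>The semigroup S is the carrier (UNIV) of a type of class semigroup_mult.\<close>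

definition left_mult_set :: "'a::semigroup_mult \<Rightarrow> 'a set" where
  "left_mult_set a = {x * a | x. True}"

definition sandwich_set :: "'a::semigroup_mult \<Rightarrow> 'a set" where
  "sandwich_set a = {a * x * a | x. True}"

definition Reg_in :: "'a::semigroup_mult set \<Rightarrow> 'a set" where
  "Reg_in T = {x \<in> T. \<exists>y \<in> T. x = x * y * x}"

abbreviation Reg :: "'a::semigroup_mult set" where
  "Reg \<equiv> Reg_in UNIV"

definition principal_left :: "'a::semigroup_mult \<Rightarrow> 'a set" where
  "principal_left x = insert x {s * x | s. True}"

definition green_L :: "'a::semigroup_mult \<Rightarrow> 'a \<Rightarrow> bool" where
  "green_L x y \<longleftrightarrow> principal_left x = principal_left y"

end

theory Submission
  imports Defs
begin

text \<open>If \<open>x \<L> ax\<close>, then \<open>x = t a x\<close> for some \<open>t \<in> S\<^sup>1\<close>, and an inverse \<open>y\<close> of \<open>ax\<close> gives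
  \<open>x = t (ax) y (ax) = x (y a) x\<close>; as \<open>ya \<in> Sa\<close>, \<open>x\<close> is regular in the semigroup \<open>Sa\<close>.
  Conversely, if \<open>x = x z x\<close> with \<open>z = w a \<in> Sa\<close>, then \<open>x y = (x w) a (x y)\<close> for every
  \<open>y\<close>, so \<open>x y \<L> a x y\<close>; with \<open>y = z x\<close> (so \<open>x y = x\<close>) this gives both \<open>Reg(Sa) \<subseteq> P\<close> and the right ideal property.\<close>

lemma left_mult_set_iff: "x \<in> left_mult_set a \<longleftrightarrow> (\<exists>s. x = s * a)"
  unfolding left_mult_set_def by blast

lemma principal_left_subset:
  fixes u v :: "'a::semigroup_mult"
  assumes "u \<in> principal_left v"
  shows "principal_left u \<subseteq> principal_left v"
  using assms unfolding principal_left_def by (auto simp: mult.assoc[symmetric])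

lemma green_L_left_mult_iff:
  fixes a u :: "'a::semigroup_mult"
  shows "green_L u (a * u) \<longleftrightarrow> u \<in> principal_left (a * u)"
proof
  assume "u \<in> principal_left (a * u)"
  moreover have "a * u \<in> principal_left u" unfolding principal_left_def by blast
  ultimately show "green_L u (a * u)"
    unfolding green_L_def using principal_left_subset by blast
qed (auto simp: green_L_def principal_left_def)

lemma green_L_left_mult_if_eq:
  fixes a u v :: "'a::semigroup_mult"
  assumes "u = v * (a * u)"
  shows "green_L u (a * u)"
  using assms unfolding green_L_left_mult_iff principal_left_def by blast

lemma regular_in_left_mult_set_if_green_L:
  fixes a x :: "'a::semigroup_mult"
  assumes "x \<in> left_mult_set a" and "green_L x (a * x)" and "a * x \<in> Reg"
  shows "x \<in> Reg_in (left_mult_set a)"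
proof -
  obtain y where y: "a * x = a * x * y * (a * x)"
    using assms(3) unfolding Reg_in_def by blast
  from assms(2) consider "x = a * x" | t where "x = t * (a * x)"
    unfolding green_L_left_mult_iff principal_left_def by blast
  then have "x = x * (y * a) * x"
  proof cases
    case 1
    with y have "x = x * y * (a * x)" by simp
    then show ?thesis by (metis mult.assoc)
  next
    case 2
    with y show ?thesis by (metis mult.assoc)
  qed
  moreover have "y * a \<in> left_mult_set a" unfolding left_mult_set_iff by blast
  ultimately show ?thesis using assms(1) unfolding Reg_in_def by blast
qed

lemma green_L_right_mult_of_regular_in_left_mult_set:
  fixes a x :: "'a::semigroup_mult"
  assumes "x \<in> Reg_in (left_mult_set a)"
  shows "green_L (x * y) (a * (x * y))"
proof -
  obtain z where "z \<in> left_mult_set a" "x = x * z * x"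
    using assms unfolding Reg_in_def by blast
  then obtain w where "x = x * (w * a) * x" unfolding left_mult_set_iff by blast
  then have "x * y = (x * w) * (a * (x * y))" by (metis mult.assoc)
  then show ?thesis by (rule green_L_left_mult_if_eq)
qed

lemma right_mult_mem_left_mult_set:
  "y \<in> left_mult_set a \<Longrightarrow> x * y \<in> left_mult_set a"
  unfolding left_mult_set_iff by (metis mult.assoc)

lemma left_mult_mem_sandwich_set:
  "x \<in> left_mult_set a \<Longrightarrow> a * x \<in> sandwich_set a"
  unfolding left_mult_set_iff sandwich_set_def by (auto simp: mult.assoc)

lemma Reg_in_subset_Reg: "Reg_in T \<subseteq> Reg"
  unfolding Reg_in_def by blast

theorem corollary3p3:
  fixes a :: "'a::semigroup_mult"
  defines "P \<equiv> {x \<in> left_mult_set a. green_L x (a * x)}"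
  assumes "sandwich_set a \<subseteq> Reg"
  shows "P \<subseteq> Reg \<and> Reg_in (left_mult_set a) = P
         \<and> (\<forall>x \<in> P. \<forall>y \<in> left_mult_set a. x * y \<in> P)"
proof -
  have P_sub: "P \<subseteq> Reg_in (left_mult_set a)"
    using assms(2) left_mult_mem_sandwich_set regular_in_left_mult_set_if_green_L
    unfolding P_def by blast
  moreover have "x \<in> P" if "x \<in> Reg_in (left_mult_set a)" for x
  proof -
    from that obtain z where "x = x * z * x" unfolding Reg_in_def by blast
    then have "x = x * (z * x)" by (simp add: mult.assoc)
    moreover have "green_L (x * (z * x)) (a * (x * (z * x)))"
      using that by (rule green_L_right_mult_of_regular_in_left_mult_set)
    ultimately show ?thesis using that unfolding P_def Reg_in_def by simp
  qed
  moreover have "x * y \<in> P" if "x \<in> P" and "y \<in> left_mult_set a" for x y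
    using that P_sub green_L_right_mult_of_regular_in_left_mult_set
      right_mult_mem_left_mult_set unfolding P_def by blast
  ultimately show ?thesis using Reg_in_subset_Reg by blast
qed

end
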